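(* Let $U,X,Y$ be real random variables forming a Markov chain $U-X-Y$ with $Y$ generated from $X$ through a transition kernel $W_{Y|X}$. For $l>0$ let $\hat X=\mathrm{sign}(X)\min(l,|X|)$ and let $\hat Y$ be generated from $\hat X$ through the same kernel, $\hat Y\sim W_{Y|X}(\cdot\mid\hat X)$, conditionally independent of $(U,X)$ given $\hat X$. Then $I(U;\hat Y)\to I(U;Y)$ as $l\to\infty$.
   Context: Mutual information of general random variables is $I(U;Y)=\sup_Q I(U_Q;Y_Q)$, the supremum over finite measurable partitions $Q$ of the discrete mutual information of the quantized variables. *)

theory Defs
  imports "HOL-Probability.Probability"
begin

definition finite_partition :: "real set set \<Rightarrow> bool" where
  "finite_partition Q \<longleftrightarrow> finite Q \<and> Q \<subseteq> sets borel \<and> \<Union>Q = UNIV \<and> disjoint Q \<and> {} \<notin> Q"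

text \<open>Discrete mutual information (natural log, convention 0 log 0 = 0) of the
  quantizations of U by Q and of Y by R.\<close>
definition disc_MI :: "'a measure \<Rightarrow> ('a \<Rightarrow> real) \<Rightarrow> ('a \<Rightarrow> real) \<Rightarrow> real set set \<Rightarrow> real set set \<Rightarrow> real" where
  "disc_MI M U Y Q R =
     (\<Sum>A\<in>Q. \<Sum>B\<in>R.
        let p = measure M {\<omega>\<in>space M. U \<omega> \<in> A \<and> Y \<omega> \<in> B} in
        p * ln (p / (measure M {\<omega>\<in>space M. U \<omega> \<in> A} * measure M {\<omega>\<in>space M. Y \<omega> \<in> B})))"

definition gen_MI :: "'a measure \<Rightarrow> ('a \<Rightarrow> real) \<Rightarrow> ('a \<Rightarrow> real) \<Rightarrow> ereal" where
  "gen_MI M U Y = (SUP QR \<in> {(Q, R). finite_partition Q \<and> finite_partition R}.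
                      ereal (disc_MI M U Y (fst QR) (snd QR)))"

definition clip :: "real \<Rightarrow> real \<Rightarrow> real" where
  "clip l x = sgn x * min l \<bar>x\<bar>"

end

theory Submission
  imports Defs "HOL-Real_Asymp.Real_Asymp"
begin

(* For finite partitions Q of the U-axis and R of the
   Y-axis, the discrete mutual information is a finite expression in the
   joint cell probabilities and is continuous in them.  Hence:

   - Lower bound: for fixed (Q, R) the joint probabilities of (U, Yh l) and
     (U, Y) differ at most by P(|X| > l), so disc_MI for Yh l converges to
     disc_MI for Y; taking suprema gives liminf I(U; Yh l) >= I(U; Y).
   - Upper bound: refine by the three cells F of X (inside [-l, l], above l,
     below -l).  On the inner cell Yh l and Y have the same joint law with U;
     on an outer cell Yh l is drawn from the fixed law W(+-l), independent of
     U.  A purely combinatorial inequality for nonnegative arrays (conditioning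
     reduces entropy) then yields
        I_{Q,R}(U; Yh l) <= I_{Q,R}(U; Y) + H(F),
     and H(F) -> 0 because the tails of X vanish. *)

definition eta :: "real \<Rightarrow> real" where
  "eta x = x * ln x"

lemma eta_0 [simp]: "eta 0 = 0" and eta_1 [simp]: "eta 1 = 0"
  by (simp_all add: eta_def)

lemma eta_mult:
  assumes "0 \<le> x" "0 \<le> y"
  shows "eta (x * y) = y * eta x + x * eta y"
proof (cases "x = 0 \<or> y = 0")
  case False
  then have "0 < x" "0 < y" using assms by auto
  then show ?thesis by (simp add: eta_def ln_mult algebra_simps)
qed (auto simp: eta_def)

text \<open>Superadditivity of eta on nonnegative reals (eta is convex with eta 0 = 0).\<close>
lemma eta_add_ge:
  assumes "0 \<le> x" "0 \<le> y"
  shows "eta x + eta y \<le> eta (x + y)"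
proof -
  have *: "x * ln x \<le> x * ln (x + y)" if "0 \<le> x" "0 \<le> y" for x y :: real
  proof (cases "x = 0")
    case False
    then show ?thesis using that by (intro mult_left_mono) auto
  qed simp
  show ?thesis using *[OF assms] *[OF assms(2,1)] by (simp add: eta_def algebra_simps)
qed

lemma eta_sum_ge:
  assumes "finite S" "\<And>s. s \<in> S \<Longrightarrow> 0 \<le> f s"
  shows "(\<Sum>s\<in>S. eta (f s)) \<le> eta (\<Sum>s\<in>S. f s)"
  using assms
proof (induction S rule: finite_induct)
  case (insert a S)
  have "(\<Sum>s\<in>insert a S. eta (f s)) = eta (f a) + (\<Sum>s\<in>S. eta (f s))"
    using insert by simp
  also have "\<dots> \<le> eta (f a) + eta (\<Sum>s\<in>S. f s)"
    using insert by simp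
  also have "\<dots> \<le> eta (f a + (\<Sum>s\<in>S. f s))"
    by (rule eta_add_ge) (use insert in \<open>auto intro: sum_nonneg\<close>)
  finally show ?case using insert by simp
qed simp

lemma eta_continuous_on: "continuous_on {0..} eta"
proof -
  have "continuous (at x within {0..}) eta" if "0 \<le> x" for x
  proof (cases "x = 0")
    case True
    have "((\<lambda>x::real. x * ln x) \<longlongrightarrow> 0) (at_right 0)" by real_asymp
    then show ?thesis
      using True by (simp add: continuous_within at_within_Ici_at_right eta_def [abs_def])
  next
    case False
    then have "isCont eta x"
      using that unfolding eta_def [abs_def] by (auto intro!: continuous_intros)
    then show ?thesis by (rule continuous_at_imp_continuous_at_within)
  qed
  then show ?thesis by (simp add: continuous_on_eq_continuous_within)
qed

lemma eta_tendsto: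
  assumes "(f \<longlongrightarrow> c) F" "\<forall>\<^sub>F x in F. 0 \<le> f x" "0 \<le> c"
  shows "((\<lambda>x. eta (f x)) \<longlongrightarrow> eta c) F"
  by (rule continuous_on_tendsto_compose[OF eta_continuous_on assms(1)]) (use assms in auto)

text \<open>The pointwise estimate behind the Gibbs inequality, from ln t <= t - 1.\<close>
lemma eta_gibbs_term:
  assumes "0 \<le> p" "p \<le> r" "p \<le> c" "0 < T"
  shows "p - r * c / T \<le> eta p - p * ln r - p * ln c + p * ln T"
proof (cases "p = 0")
  case False
  then have p: "0 < p" and r: "0 < r" and c: "0 < c" using assms by auto
  have "ln (r * c / (p * T)) \<le> r * c / (p * T) - 1"
    by (rule ln_le_minus_one) (use p r c assms in auto)
  then have "p * ln (r * c / (p * T)) \<le> p * (r * c / (p * T) - 1)"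
    using p by (intro mult_left_mono) auto
  moreover have "ln (r * c / (p * T)) = ln r + ln c - ln p - ln T"
    using p r c assms by (simp add: ln_div ln_mult)
  moreover have "p * (r * c / (p * T) - 1) = r * c / T - p"
    using p by (simp add: field_simps)
  ultimately have "p * (ln r + ln c - ln p - ln T) \<le> r * c / T - p" by simp
  then show ?thesis by (simp add: eta_def algebra_simps)
qed (use assms in simp)

section \<open>Entropy-type functionals of nonnegative arrays\<close>

text \<open>For an array r indexed by Q x R, cond_eta Q R r is the negative conditional
  entropy -H(A|B) (unnormalised), and eta_MI Q R r = H(A) - H(A|B) is the mutual
  information of the two indices.\<close>
definition cond_eta :: "'a set \<Rightarrow> 'b set \<Rightarrow> ('a \<Rightarrow> 'b \<Rightarrow> real) \<Rightarrow> real" where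
  "cond_eta Q R r = (\<Sum>b\<in>R. (\<Sum>a\<in>Q. eta (r a b)) - eta (\<Sum>a\<in>Q. r a b))"

definition eta_MI :: "'a set \<Rightarrow> 'b set \<Rightarrow> ('a \<Rightarrow> 'b \<Rightarrow> real) \<Rightarrow> real" where
  "eta_MI Q R r = cond_eta Q R r - (\<Sum>a\<in>Q. eta (\<Sum>b\<in>R. r a b))"

lemma eta_MI_cong:
  "(\<And>a b. a \<in> Q \<Longrightarrow> b \<in> R \<Longrightarrow> r a b = s a b) \<Longrightarrow> eta_MI Q R r = eta_MI Q R s"
  unfolding eta_MI_def cond_eta_def by (intro arg_cong2[where f = "(-)"] sum.cong) auto

lemma eta_MI_tendsto:
  assumes "finite Q" "finite R"
    and "\<And>l a b. 0 \<le> r l a b" "\<And>a b. 0 \<le> s a b"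
    and "\<And>a b. a \<in> Q \<Longrightarrow> b \<in> R \<Longrightarrow> ((\<lambda>l. r l a b) \<longlongrightarrow> s a b) F"
  shows "((\<lambda>l. eta_MI Q R (r l)) \<longlongrightarrow> eta_MI Q R s) F"
  unfolding eta_MI_def cond_eta_def
  by (intro tendsto_diff tendsto_sum eta_tendsto always_eventually allI sum_nonneg assms) auto

text \<open>The Gibbs inequality for an array of positive total mass T, with row sums
  row sums rsum and column sums csum: summing eta_gibbs_term over all entries.\<close>
lemma gibbs_array:
  assumes "finite Q" "finite R" "\<And>a b. a \<in> Q \<Longrightarrow> b \<in> R \<Longrightarrow> 0 \<le> r a b"
    and rsum: "\<And>a. rsum a = (\<Sum>b\<in>R. r a b)" and csum: "\<And>b. csum b = (\<Sum>a\<in>Q. r a b)"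
    and T: "T = (\<Sum>a\<in>Q. rsum a)" "0 < T"
  shows "(\<Sum>a\<in>Q. eta (rsum a)) - eta T \<le> (\<Sum>b\<in>R. (\<Sum>a\<in>Q. eta (r a b)) - eta (csum b))"
proof -
  have T_col: "T = (\<Sum>b\<in>R. csum b)" unfolding T rsum csum by (rule sum.swap)
  have le_row: "r a b \<le> rsum a" and le_col: "r a b \<le> csum b" if "a \<in> Q" "b \<in> R" for a b
    unfolding rsum csum using that assms by (auto intro: member_le_sum)
  have "(\<Sum>a\<in>Q. \<Sum>b\<in>R. r a b - rsum a * csum b / T) \<le>
        (\<Sum>a\<in>Q. \<Sum>b\<in>R. eta (r a b) - r a b * ln (rsum a) - r a b * ln (csum b) + r a b * ln T)"
    by (intro sum_mono eta_gibbs_term) (use assms le_row le_col in auto)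
  also have "\<dots> = (\<Sum>a\<in>Q. \<Sum>b\<in>R. eta (r a b)) - (\<Sum>a\<in>Q. eta (rsum a))
                  - (\<Sum>b\<in>R. eta (csum b)) + eta T"
  proof -
    have "(\<Sum>a\<in>Q. \<Sum>b\<in>R. r a b * ln (rsum a)) = (\<Sum>a\<in>Q. eta (rsum a))"
      unfolding eta_def rsum by (simp add: sum_distrib_right)
    moreover have "(\<Sum>a\<in>Q. \<Sum>b\<in>R. r a b * ln (csum b)) = (\<Sum>b\<in>R. eta (csum b))"
      unfolding eta_def csum by (subst sum.swap) (simp add: sum_distrib_right)
    moreover have "(\<Sum>a\<in>Q. \<Sum>b\<in>R. r a b * ln T) = eta T"
      unfolding eta_def T(1) rsum by (simp add: sum_distrib_right)
    ultimately show ?thesis by (simp add: sum_subtractf sum.distrib)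
  qed
  finally have *: "(\<Sum>a\<in>Q. \<Sum>b\<in>R. r a b - rsum a * csum b / T) \<le>
       (\<Sum>a\<in>Q. \<Sum>b\<in>R. eta (r a b)) - (\<Sum>a\<in>Q. eta (rsum a)) - (\<Sum>b\<in>R. eta (csum b)) + eta T" .
  have "(\<Sum>a\<in>Q. \<Sum>b\<in>R. r a b - rsum a * csum b / T) = T - (\<Sum>a\<in>Q. rsum a) * (\<Sum>b\<in>R. csum b) / T"
    by (simp add: sum_subtractf rsum[symmetric] T(1)[symmetric] sum_divide_distrib[symmetric]
        sum_distrib_left[symmetric] sum_distrib_right[symmetric])
  also have "\<dots> = 0" using T by (simp add: T_col[symmetric])
  finally show ?thesis using * by (simp add: sum_subtractf sum.swap[of _ R Q])
qed

text \<open>Conditioning reduces entropy: -H(A) <= -H(A|B), for any nonnegative array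
  (the total mass enters through its eta).  This is the nonnegativity of the
  unnormalised mutual information.\<close>
lemma conditioning_reduces_entropy:
  assumes "finite Q" "finite R" "\<And>a b. a \<in> Q \<Longrightarrow> b \<in> R \<Longrightarrow> 0 \<le> r a b"
  shows "(\<Sum>a\<in>Q. eta (\<Sum>b\<in>R. r a b)) - eta (\<Sum>a\<in>Q. \<Sum>b\<in>R. r a b) \<le> cond_eta Q R r"
proof (cases "(\<Sum>a\<in>Q. \<Sum>b\<in>R. r a b) = 0")
  case True
  then have "r a b = 0" if "a \<in> Q" "b \<in> R" for a b
    using that assms by (simp add: sum_nonneg sum_nonneg_eq_0_iff)
  then show ?thesis
    using True unfolding cond_eta_def by (simp cong: sum.cong)
next
  case False
  then have "0 < (\<Sum>a\<in>Q. \<Sum>b\<in>R. r a b)"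
    using assms by (metis order_le_less sum_nonneg)
  from gibbs_array[OF assms refl refl refl this] show ?thesis
    unfolding cond_eta_def .

qed

text \<open>Refining the conditioning variable B to the pair (F, B) can only increase
  -H(A|.): this is the first step of the data-processing argument.\<close>
lemma cond_eta_refine:
  assumes "finite F" "finite Q" "finite R"
    and "\<And>f a b. f \<in> F \<Longrightarrow> a \<in> Q \<Longrightarrow> b \<in> R \<Longrightarrow> 0 \<le> p f a b"
  shows "cond_eta Q R (\<lambda>a b. \<Sum>f\<in>F. p f a b) \<le> (\<Sum>f\<in>F. cond_eta Q R (p f))"
proof -
  have "(\<Sum>a\<in>Q. eta (\<Sum>f\<in>F. p f a b)) - eta (\<Sum>a\<in>Q. \<Sum>f\<in>F. p f a b)
        \<le> (\<Sum>f\<in>F. (\<Sum>a\<in>Q. eta (p f a b)) - eta (\<Sum>a\<in>Q. p f a b))" if "b \<in> R" for b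
    using conditioning_reduces_entropy[of Q F "\<lambda>a f. p f a b"] assms that
    by (simp add: cond_eta_def)
  then have "cond_eta Q R (\<lambda>a b. \<Sum>f\<in>F. p f a b)
        \<le> (\<Sum>b\<in>R. \<Sum>f\<in>F. (\<Sum>a\<in>Q. eta (p f a b)) - eta (\<Sum>a\<in>Q. p f a b))"
    unfolding cond_eta_def by (intro sum_mono) (simp add: sum.swap[of _ Q F])
  also have "\<dots> = (\<Sum>f\<in>F. cond_eta Q R (p f))"
    unfolding cond_eta_def by (rule sum.swap)
  finally show ?thesis .
qed

lemma cond_eta_product:
  assumes "finite Q" "finite R" "\<And>b. b \<in> R \<Longrightarrow> 0 \<le> w b" "\<And>a. a \<in> Q \<Longrightarrow> 0 \<le> m a"
    and "(\<Sum>b\<in>R. w b) = 1"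
  shows "cond_eta Q R (\<lambda>a b. w b * m a) = (\<Sum>a\<in>Q. eta (m a)) - eta (\<Sum>a\<in>Q. m a)"
proof -
  have row: "(\<Sum>a\<in>Q. eta (w b * m a)) - eta (\<Sum>a\<in>Q. w b * m a)
           = w b * ((\<Sum>a\<in>Q. eta (m a)) - eta (\<Sum>a\<in>Q. m a))" if "b \<in> R" for b
  proof -
    have "(\<Sum>a\<in>Q. eta (w b * m a)) = (\<Sum>a\<in>Q. m a * eta (w b) + w b * eta (m a))"
      by (intro sum.cong refl eta_mult) (use assms that in auto)
    also have "\<dots> = (\<Sum>a\<in>Q. m a) * eta (w b) + w b * (\<Sum>a\<in>Q. eta (m a))"
      by (simp add: sum.distrib sum_distrib_left sum_distrib_right)
    finally have 1: "(\<Sum>a\<in>Q. eta (w b * m a)) = (\<Sum>a\<in>Q. m a) * eta (w b) + w b * (\<Sum>a\<in>Q. eta (m a))" .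
    have "eta (\<Sum>a\<in>Q. w b * m a) = eta (w b * (\<Sum>a\<in>Q. m a))"
      by (simp add: sum_distrib_left)
    also have "\<dots> = (\<Sum>a\<in>Q. m a) * eta (w b) + w b * eta (\<Sum>a\<in>Q. m a)"
      by (rule eta_mult) (use assms that in \<open>auto intro: sum_nonneg\<close>)
    finally show ?thesis using 1 by (simp add: algebra_simps)
  qed
  have "cond_eta Q R (\<lambda>a b. w b * m a) = (\<Sum>b\<in>R. w b * ((\<Sum>a\<in>Q. eta (m a)) - eta (\<Sum>a\<in>Q. m a)))"
    unfolding cond_eta_def using row by (rule sum.cong[OF refl])
  also have "\<dots> = (\<Sum>a\<in>Q. eta (m a)) - eta (\<Sum>a\<in>Q. m a)"
    by (simp add: sum_distrib_right[symmetric] assms(5))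
  finally show ?thesis .
qed

text \<open>Replacing the observation by independent noise can only lose information about A.\<close>
lemma cond_eta_independent_le:
  assumes "finite Q" "finite R" "\<And>b. b \<in> R \<Longrightarrow> 0 \<le> w b" "(\<Sum>b\<in>R. w b) = 1"
    and "\<And>a b. a \<in> Q \<Longrightarrow> b \<in> R \<Longrightarrow> 0 \<le> q a b"
  shows "cond_eta Q R (\<lambda>a b. w b * (\<Sum>b'\<in>R. q a b')) \<le> cond_eta Q R q"
proof -
  have "cond_eta Q R (\<lambda>a b. w b * (\<Sum>b'\<in>R. q a b'))
        = (\<Sum>a\<in>Q. eta (\<Sum>b\<in>R. q a b)) - eta (\<Sum>a\<in>Q. \<Sum>b\<in>R. q a b)"
    by (rule cond_eta_product) (use assms in \<open>auto intro: sum_nonneg\<close>)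
  also have "\<dots> \<le> cond_eta Q R q"
    by (rule conditioning_reduces_entropy) (use assms in auto)
  finally show ?thesis .
qed

text \<open>Removing the refinement F from the conditioning costs at most H(F), for a
  probability array (total mass 1).\<close>
lemma cond_eta_coarsen:
  assumes "finite F" "finite Q" "finite R"
    and "\<And>f a b. f \<in> F \<Longrightarrow> a \<in> Q \<Longrightarrow> b \<in> R \<Longrightarrow> 0 \<le> q f a b"
    and "(\<Sum>f\<in>F. \<Sum>a\<in>Q. \<Sum>b\<in>R. q f a b) = 1"
  shows "(\<Sum>f\<in>F. cond_eta Q R (q f))
      \<le> cond_eta Q R (\<lambda>a b. \<Sum>f\<in>F. q f a b) - (\<Sum>f\<in>F. eta (\<Sum>a\<in>Q. \<Sum>b\<in>R. q f a b))"
proof -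
  define s where "s f b = (\<Sum>a\<in>Q. q f a b)" for f b
  have s_ge: "0 \<le> s f b" if "f \<in> F" "b \<in> R" for f b
    unfolding s_def using assms that by (auto intro: sum_nonneg)
  have "(\<Sum>f\<in>F. \<Sum>a\<in>Q. eta (q f a b)) \<le> (\<Sum>a\<in>Q. eta (\<Sum>f\<in>F. q f a b))" if "b \<in> R" for b
  proof -
    have "(\<Sum>f\<in>F. \<Sum>a\<in>Q. eta (q f a b)) = (\<Sum>a\<in>Q. \<Sum>f\<in>F. eta (q f a b))"
      by (rule sum.swap)
    also have "\<dots> \<le> (\<Sum>a\<in>Q. eta (\<Sum>f\<in>F. q f a b))"
      by (intro sum_mono eta_sum_ge) (use assms that in auto)
    finally show ?thesis .
  qed
  then have joint: "(\<Sum>b\<in>R. \<Sum>f\<in>F. \<Sum>a\<in>Q. eta (q f a b))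
      \<le> (\<Sum>b\<in>R. \<Sum>a\<in>Q. eta (\<Sum>f\<in>F. q f a b))"
    by (rule sum_mono)
  have "(\<Sum>f\<in>F. eta (\<Sum>b\<in>R. s f b)) - eta (\<Sum>f\<in>F. \<Sum>b\<in>R. s f b) \<le> cond_eta F R s"
    by (rule conditioning_reduces_entropy) (use assms s_ge in auto)
  moreover have "(\<Sum>f\<in>F. \<Sum>b\<in>R. s f b) = 1"
    using assms(5) unfolding s_def by (simp add: sum.swap[of _ Q R])
  moreover have "(\<Sum>b\<in>R. s f b) = (\<Sum>a\<in>Q. \<Sum>b\<in>R. q f a b)" for f
    unfolding s_def by (rule sum.swap)
  ultimately have marg: "(\<Sum>f\<in>F. eta (\<Sum>a\<in>Q. \<Sum>b\<in>R. q f a b))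
      \<le> (\<Sum>b\<in>R. \<Sum>f\<in>F. eta (s f b)) - (\<Sum>b\<in>R. eta (\<Sum>f\<in>F. s f b))"
    by (simp add: cond_eta_def sum_subtractf)
  have "(\<Sum>a\<in>Q. \<Sum>f\<in>F. q f a b) = (\<Sum>f\<in>F. s f b)" for b
    unfolding s_def by (rule sum.swap)
  then show ?thesis
    using joint marg unfolding cond_eta_def s_def
    by (simp add: sum_subtractf sum.swap[of _ F R])
qed

text \<open>The array p (law of A and the clipped
  output, split along the cells f of the input) agrees cell by cell with q (law
  with the original output), except on cells where the clipped output is drawn
  independently from a fixed law w.\<close>
lemma clipped_channel_bound:
  fixes p q :: "'f \<Rightarrow> 'a \<Rightarrow> 'b \<Rightarrow> real"
  assumes fin: "finite F" "finite Q" "finite R"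
    and p_ge: "\<And>f a b. f \<in> F \<Longrightarrow> a \<in> Q \<Longrightarrow> b \<in> R \<Longrightarrow> 0 \<le> p f a b"
    and q_ge: "\<And>f a b. f \<in> F \<Longrightarrow> a \<in> Q \<Longrightarrow> b \<in> R \<Longrightarrow> 0 \<le> q f a b"
    and total: "(\<Sum>f\<in>F. \<Sum>a\<in>Q. \<Sum>b\<in>R. q f a b) = 1"
    and cells: "\<And>f. f \<in> F \<Longrightarrow> (\<forall>a\<in>Q. \<forall>b\<in>R. p f a b = q f a b) \<or>
        (\<exists>w. (\<forall>b\<in>R. 0 \<le> w b) \<and> (\<Sum>b\<in>R. w b) = 1 \<and>
             (\<forall>a\<in>Q. \<forall>b\<in>R. p f a b = w b * (\<Sum>b'\<in>R. q f a b')))"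
  shows "eta_MI Q R (\<lambda>a b. \<Sum>f\<in>F. p f a b)
       \<le> eta_MI Q R (\<lambda>a b. \<Sum>f\<in>F. q f a b) - (\<Sum>f\<in>F. eta (\<Sum>a\<in>Q. \<Sum>b\<in>R. q f a b))"
proof -
  have cell: "cond_eta Q R (p f) \<le> cond_eta Q R (q f) \<and> (\<forall>a\<in>Q. (\<Sum>b\<in>R. p f a b) = (\<Sum>b\<in>R. q f a b))"
    if f: "f \<in> F" for f
    using cells[OF f]
  proof (elim disjE exE conjE)
    assume "\<forall>a\<in>Q. \<forall>b\<in>R. p f a b = q f a b"
    then show ?thesis unfolding cond_eta_def by simp
  next
    fix w assume w: "\<forall>b\<in>R. 0 \<le> w b" "(\<Sum>b\<in>R. w b) = 1"
      and pw: "\<forall>a\<in>Q. \<forall>b\<in>R. p f a b = w b * (\<Sum>b'\<in>R. q f a b')"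
    have "cond_eta Q R (p f) = cond_eta Q R (\<lambda>a b. w b * (\<Sum>b'\<in>R. q f a b'))"
      unfolding cond_eta_def using pw by simp
    also have "\<dots> \<le> cond_eta Q R (q f)"
      by (rule cond_eta_independent_le) (use fin w q_ge f in auto)
    moreover have "(\<Sum>b\<in>R. p f a b) = (\<Sum>b\<in>R. q f a b)" if "a \<in> Q" for a
      using pw that w by (simp add: sum_distrib_right[symmetric])
    ultimately show ?thesis by simp
  qed
  have marg: "(\<Sum>b\<in>R. \<Sum>f\<in>F. p f a b) = (\<Sum>b\<in>R. \<Sum>f\<in>F. q f a b)" if "a \<in> Q" for a
  proof -
    have "(\<Sum>b\<in>R. \<Sum>f\<in>F. p f a b) = (\<Sum>f\<in>F. \<Sum>b\<in>R. p f a b)" by (rule sum.swap)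
    also have "\<dots> = (\<Sum>f\<in>F. \<Sum>b\<in>R. q f a b)" by (rule sum.cong[OF refl]) (use cell that in auto)
    also have "\<dots> = (\<Sum>b\<in>R. \<Sum>f\<in>F. q f a b)" by (rule sum.swap)
    finally show ?thesis .
  qed
  have "cond_eta Q R (\<lambda>a b. \<Sum>f\<in>F. p f a b) \<le> (\<Sum>f\<in>F. cond_eta Q R (p f))"
    by (rule cond_eta_refine) (use fin p_ge in auto)
  also have "\<dots> \<le> (\<Sum>f\<in>F. cond_eta Q R (q f))"
    using cell by (intro sum_mono) auto
  also have "\<dots> \<le> cond_eta Q R (\<lambda>a b. \<Sum>f\<in>F. q f a b) - (\<Sum>f\<in>F. eta (\<Sum>a\<in>Q. \<Sum>b\<in>R. q f a b))"
    by (rule cond_eta_coarsen) (use fin q_ge total in auto)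
  finally show ?thesis
    unfolding eta_MI_def using marg by (simp cong: sum.cong)
qed

section \<open>Events and finite partitions\<close>

definition event :: "'a measure \<Rightarrow> ('a \<Rightarrow> real) \<Rightarrow> real set \<Rightarrow> 'a set" where
  "event M V A = {\<omega>\<in>space M. V \<omega> \<in> A}"

lemma event_subset_space: "event M V A \<subseteq> space M"
  by (auto simp: event_def)

lemma event_Int_space [simp]:
  "space M \<inter> event M V A = event M V A" "event M V A \<inter> space M = event M V A"
  "space M \<inter> (event M V A \<inter> S) = event M V A \<inter> S" "S \<inter> event M V A \<inter> space M = S \<inter> event M V A"
  using event_subset_space[of M V A] by blast+

lemma event_sets [intro]:
  assumes "V \<in> borel_measurable M" "A \<in> sets borel"
  shows "event M V A \<in> sets M"
proof -
  have "V -` A \<inter> space M \<in> sets M" using assms by (rule measurable_sets)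
  moreover have "V -` A \<inter> space M = event M V A" by (auto simp: event_def)
  ultimately show ?thesis by simp
qed

lemma finite_partition_unique:
  "finite_partition Q \<Longrightarrow> A \<in> Q \<Longrightarrow> B \<in> Q \<Longrightarrow> x \<in> A \<Longrightarrow> x \<in> B \<Longrightarrow> A = B"
  unfolding finite_partition_def disjoint_def by blast

lemma finite_partition_sets: "finite_partition Q \<Longrightarrow> A \<in> Q \<Longrightarrow> A \<in> sets borel"
  and finite_partition_finite: "finite_partition Q \<Longrightarrow> finite Q"
  unfolding finite_partition_def by blast+

lemma finite_partition_trivial: "finite_partition {UNIV}"
  unfolding finite_partition_def by auto

lemma measure_partition_sum:
  assumes "finite_measure M" "finite_partition Q" "V \<in> borel_measurable M"
    and "S \<in> sets M" "T \<in> sets M"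
  shows "(\<Sum>A\<in>Q. measure M (S \<inter> event M V A \<inter> T)) = measure M (S \<inter> T)"
proof -
  interpret finite_measure M by fact
  have "measure M (\<Union>A\<in>Q. S \<inter> event M V A \<inter> T) = (\<Sum>A\<in>Q. measure M (S \<inter> event M V A \<inter> T))"
  proof (rule finite_measure_finite_Union)
    show "finite Q" using assms(2) by (rule finite_partition_finite)
    show "(\<lambda>A. S \<inter> event M V A \<inter> T) ` Q \<subseteq> sets M"
      using assms finite_partition_sets by blast
    show "disjoint_family_on (\<lambda>A. S \<inter> event M V A \<inter> T) Q"
      unfolding disjoint_family_on_def event_def using finite_partition_unique[OF assms(2)] by blast
  qed
  moreover have "(\<Union>A\<in>Q. S \<inter> event M V A \<inter> T) = S \<inter> T"
    using assms(2,4) sets.sets_into_space unfolding finite_partition_def event_def by blast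
  ultimately show ?thesis by simp
qed

lemma prob_partition_sum:
  assumes "prob_space N" "sets N = sets borel" "finite_partition R"
  shows "(\<Sum>B\<in>R. measure N B) = 1"
proof -
  interpret N: prob_space N by fact
  have "measure N (\<Union>R) = (\<Sum>B\<in>R. measure N B)"
  proof (rule N.finite_measure_finite_Union[where A = "\<lambda>B. B", simplified])
    show "finite R" using assms(3) by (rule finite_partition_finite)
    show "R \<subseteq> sets N" using assms(2,3) finite_partition_sets by auto
    show "disjoint_family_on (\<lambda>B. B) R"
      unfolding disjoint_family_on_def using finite_partition_unique[OF assms(3)] by blast
  qed
  moreover have "\<Union>R = space N"
    using assms(3) sets_eq_imp_space_eq[OF assms(2)] unfolding finite_partition_def by simp
  ultimately show ?thesis using N.prob_space by simp
qed

lemma disc_MI_eq_eta_MI: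
  assumes "prob_space M" "finite_partition Q" "finite_partition R"
    and "U \<in> borel_measurable M" "V \<in> borel_measurable M"
  shows "disc_MI M U V Q R = eta_MI Q R (\<lambda>A B. measure M (event M U A \<inter> event M V B))"
proof -
  interpret prob_space M by fact
  define p where "p A B = measure M (event M U A \<inter> event M V B)" for A B
  define pU where "pU A = measure M (event M U A)" for A
  define pV where "pV B = measure M (event M V B)" for B
  have sets_U: "event M U A \<in> sets M" if "A \<in> Q" for A
    using assms(2,4) that by (auto intro: finite_partition_sets)
  have sets_V: "event M V B \<in> sets M" if "B \<in> R" for B
    using assms(3,5) that by (auto intro: finite_partition_sets)
  have row: "(\<Sum>B\<in>R. p A B) = pU A" if "A \<in> Q" for A
    using measure_partition_sum[OF finite_measure_axioms assms(3,5) sets_U[OF that] sets.top]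
    unfolding p_def pU_def by simp
  have col: "(\<Sum>A\<in>Q. p A B) = pV B" if "B \<in> R" for B
    using measure_partition_sum[OF finite_measure_axioms assms(2,4) sets.top sets_V[OF that]]
    unfolding p_def pV_def by simp
  have log_term: "p A B * ln (p A B / (pU A * pV B)) = eta (p A B) - p A B * ln (pU A) - p A B * ln (pV B)"
    if "A \<in> Q" "B \<in> R" for A B
  proof (cases "p A B = 0")
    case False
    then have "0 < p A B" unfolding p_def using measure_nonneg less_le by metis
    moreover have "p A B \<le> pU A" "p A B \<le> pV B"
      unfolding p_def pU_def pV_def using sets_U sets_V that by (auto intro!: finite_measure_mono)
    ultimately have "0 < p A B" "0 < pU A" "0 < pV B" by linarith+
    then show ?thesis by (simp add: eta_def ln_div ln_mult algebra_simps)
  qed simp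
  have joint_event: "{\<omega>\<in>space M. U \<omega> \<in> A \<and> V \<omega> \<in> B} = event M U A \<inter> event M V B" for A B
    by (auto simp: event_def)
  have "disc_MI M U V Q R = (\<Sum>A\<in>Q. \<Sum>B\<in>R. eta (p A B) - p A B * ln (pU A) - p A B * ln (pV B))"
    unfolding disc_MI_def Let_def
    by (intro sum.cong refl)
      (simp only: joint_event event_def[symmetric] p_def[symmetric] pU_def[symmetric]
        pV_def[symmetric] log_term)
  also have "\<dots> = (\<Sum>A\<in>Q. \<Sum>B\<in>R. eta (p A B)) - (\<Sum>A\<in>Q. (\<Sum>B\<in>R. p A B) * ln (pU A))
      - (\<Sum>B\<in>R. (\<Sum>A\<in>Q. p A B) * ln (pV B))"
    by (simp add: sum_subtractf sum_distrib_right sum.swap[of _ R Q])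
  also have "\<dots> = (\<Sum>A\<in>Q. \<Sum>B\<in>R. eta (p A B)) - (\<Sum>A\<in>Q. eta (pU A)) - (\<Sum>B\<in>R. eta (pV B))"
    using row col by (simp add: eta_def)
  also have "\<dots> = eta_MI Q R p"
    unfolding eta_MI_def cond_eta_def using row col
    by (simp add: sum_subtractf sum.swap[of _ R Q])
  finally show ?thesis unfolding p_def .
qed

section \<open>Clipping and its three cells\<close>

lemma clip_id: "\<bar>x\<bar> \<le> l \<Longrightarrow> clip l x = x"
  by (simp add: clip_def min_absorb2 sgn_mult_abs)

lemma clip_above: "0 < l \<Longrightarrow> l < x \<Longrightarrow> clip l x = l"
  and clip_below: "0 < l \<Longrightarrow> x < -l \<Longrightarrow> clip l x = -l"
  by (simp_all add: clip_def)

text \<open>The cells of the input on which clipping is the identity resp. constant.\<close>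
definition clip_cells :: "real \<Rightarrow> real set set" where
  "clip_cells l = {{-l..l}, {l<..}, {..< -l}}"

lemma clip_cells_partition:
  assumes "0 < l"
  shows "finite_partition (clip_cells l)"
proof -
  have "0 \<in> {-l..l}" "l + 1 \<in> {l<..}" "-l - 1 \<in> {..<-l}" using assms by auto
  then have "{} \<notin> clip_cells l" unfolding clip_cells_def by blast
  moreover have "\<Union>(clip_cells l) = UNIV" by (auto simp: clip_cells_def)
  moreover have "disjoint (clip_cells l)" using assms unfolding clip_cells_def disjoint_def by auto
  ultimately show ?thesis unfolding finite_partition_def by (auto simp: clip_cells_def)
qed

lemma sum_clip_cells:
  assumes "0 < l"
  shows "(\<Sum>F\<in>clip_cells l. g F) = g {-l..l} + g {l<..} + g {..<-l}"
proof -
  have "l \<in> {-l..l}" "l \<notin> {l<..}" "l \<notin> {..<-l}" "l + 1 \<in> {l<..}" "l + 1 \<notin> {..<-l}"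
    using assms by auto
  then have "{-l..l} \<noteq> {l<..}" "{-l..l} \<noteq> {..<-l}" "{l<..} \<noteq> {..<-l}" by metis+
  then show ?thesis unfolding clip_cells_def by (simp add: add.assoc)
qed

lemma tails_tendsto_0:
  assumes "prob_space M" "X \<in> borel_measurable M"
  shows "((\<lambda>l. measure M (event M X {l<..})) \<longlongrightarrow> 0) at_top"
    and "((\<lambda>l. measure M (event M X {..<-l})) \<longlongrightarrow> 0) at_top"
proof -
  interpret prob_space M by fact
  define D where "D = distr M borel X"
  interpret D: real_distribution D unfolding D_def using assms(2) by simp
  have law: "(\<lambda>l. measure M (event M X (S l))) = (\<lambda>l. measure D (S l))"
    if "\<And>l. S l \<in> sets borel" for S
  proof
    fix l
    have "X -` S l \<inter> space M = event M X (S l)" by (auto simp: event_def)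
    then show "measure M (event M X (S l)) = measure D (S l)"
      unfolding D_def using measure_distr[OF assms(2) that] by simp
  qed
  have upper: "measure D {l<..} = 1 - cdf D l" for l
  proof -
    have "measure D {l<..} = measure D (space D - {..l})"
      by (simp add: Compl_eq_Diff_UNIV[symmetric] Compl_atMost)
    also have "\<dots> = 1 - measure D {..l}" by (subst D.prob_compl) auto
    finally show ?thesis by (simp add: cdf_def)
  qed
  have "((\<lambda>l. measure D {l<..}) \<longlongrightarrow> 0) at_top"
    unfolding upper using tendsto_diff[OF tendsto_const D.cdf_lim_at_top_prob, of 1] by simp
  then show "((\<lambda>l. measure M (event M X {l<..})) \<longlongrightarrow> 0) at_top"
    using law[of "\<lambda>l. {l<..}"] by simp
  have lower: "measure D {..<-l} \<le> cdf D (-l)" for l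
    unfolding cdf_def by (rule D.finite_measure_mono) auto
  have cdf_lim: "((\<lambda>l. cdf D (-l)) \<longlongrightarrow> 0) at_top"
    by (rule filterlim_compose[OF D.cdf_lim_at_bot filterlim_uminus_at_bot_at_top])
  have "((\<lambda>l. measure D {..<-l}) \<longlongrightarrow> 0) at_top"
    by (rule tendsto_sandwich[OF always_eventually always_eventually tendsto_const cdf_lim])
      (auto intro: lower)
  then show "((\<lambda>l. measure M (event M X {..<-l})) \<longlongrightarrow> 0) at_top"
    using law[of "\<lambda>l. {..<-l}"] by simp
qed

lemma clip_cells_entropy_tendsto_0:
  assumes "prob_space M" "X \<in> borel_measurable M"
  shows "((\<lambda>l. - (\<Sum>F\<in>clip_cells l. eta (measure M (event M X F)))) \<longlongrightarrow> 0) at_top"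
proof -
  interpret prob_space M by fact
  define up where "up l = measure M (event M X {l<..})" for l
  define down where "down l = measure M (event M X {..<-l})" for l
  have up_down: "(up \<longlongrightarrow> 0) at_top" "(down \<longlongrightarrow> 0) at_top"
    using tails_tendsto_0[OF assms] unfolding up_def down_def by auto
  have inner: "measure M (event M X {-l..l}) = 1 - up l - down l" if "0 < l" for l
    using measure_partition_sum[OF finite_measure_axioms clip_cells_partition[OF that] assms(2) sets.top sets.top]
    by (simp add: sum_clip_cells[OF that] up_def down_def prob_space)
  have cells: "\<forall>\<^sub>F l in at_top. - (\<Sum>F\<in>clip_cells l. eta (measure M (event M X F)))
      = - (eta (1 - up l - down l) + eta (up l) + eta (down l))"
    using eventually_gt_at_top[of 0]
    by eventually_elim (simp add: sum_clip_cells inner up_def down_def)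
  have inner_ge: "\<forall>\<^sub>F l in at_top. 0 \<le> 1 - up l - down l"
    using eventually_gt_at_top[of 0] by eventually_elim (metis inner measure_nonneg)
  have "((\<lambda>l. - (eta (1 - up l - down l) + eta (up l) + eta (down l)))
        \<longlongrightarrow> - (eta (1 - 0 - 0) + eta 0 + eta 0)) at_top"
    by (intro tendsto_intros eta_tendsto up_down inner_ge always_eventually allI)
      (auto simp: up_def down_def)
  then show ?thesis by (simp add: tendsto_cong[OF cells])
qed

section \<open>Suprema of converging families\<close>

lemma SUP_ereal_tendsto:
  fixes f :: "'b \<Rightarrow> 'i \<Rightarrow> real" and g :: "'i \<Rightarrow> real" and e :: "'b \<Rightarrow> real"
  assumes "S \<noteq> {}"
    and conv: "\<And>i. i \<in> S \<Longrightarrow> ((\<lambda>l. f l i) \<longlongrightarrow> g i) F"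
    and err: "(e \<longlongrightarrow> 0) F"
    and dom: "\<forall>\<^sub>F l in F. \<forall>i\<in>S. f l i \<le> g i + e l"
  shows "((\<lambda>l. SUP i\<in>S. ereal (f l i)) \<longlongrightarrow> (SUP i\<in>S. ereal (g i))) F"
proof (rule order_tendstoI)
  fix a assume "a < (SUP i\<in>S. ereal (g i))"
  then obtain i where i: "i \<in> S" "a < ereal (g i)" by (auto simp: less_SUP_iff)
  have "\<forall>\<^sub>F l in F. a < ereal (f l i)"
    by (rule order_tendstoD(1)[OF tendsto_ereal[OF conv[OF i(1)]] i(2)])
  then show "\<forall>\<^sub>F l in F. a < (SUP i\<in>S. ereal (f l i))"
    by eventually_elim (use i(1) in \<open>auto simp: less_SUP_iff\<close>)
next
  fix a assume a: "(SUP i\<in>S. ereal (g i)) < a"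
  obtain i0 where "i0 \<in> S" using assms(1) by blast
  then have "ereal (g i0) \<le> (SUP i\<in>S. ereal (g i))" by (rule SUP_upper)
  then obtain s where s: "(SUP i\<in>S. ereal (g i)) = ereal s"
    using a by (cases "SUP i\<in>S. ereal (g i)") auto
  have "\<forall>\<^sub>F l in F. ereal (s + e l) < a"
    using order_tendstoD(2)[OF tendsto_ereal[OF tendsto_add[OF tendsto_const err, of s]]] a s by simp
  with dom show "\<forall>\<^sub>F l in F. (SUP i\<in>S. ereal (f l i)) < a"
  proof eventually_elim
    case (elim l)
    have "ereal (f l i) \<le> ereal (s + e l)" if "i \<in> S" for i
    proof -
      have "ereal (g i) \<le> ereal s" using SUP_upper[OF that, of "\<lambda>i. ereal (g i)"] s by simp
      moreover have "f l i \<le> g i + e l" using elim(1) that by blast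
      ultimately show ?thesis by simp
    qed
    then have "(SUP i\<in>S. ereal (f l i)) \<le> ereal (s + e l)" by (rule SUP_least)
    then show ?case using elim(2) by simp
  qed
qed

section \<open>The clipped channel\<close>

text \<open>The hypotheses of the theorem: Y is the output of the kernel W at X, and
  Yh l the output of the same kernel at the clipped input clip l X, both
  conditionally independent of U given the respective input.\<close>
locale clipped_channel =
  fixes M :: "'a measure" and U X Y :: "'a \<Rightarrow> real"
    and Yh :: "real \<Rightarrow> 'a \<Rightarrow> real" and W :: "real \<Rightarrow> real measure"
  assumes prob: "prob_space M"
    and U_meas: "U \<in> borel_measurable M" and X_meas: "X \<in> borel_measurable M"
    and Y_meas: "Y \<in> borel_measurable M"
    and Yh_meas: "\<And>l. l > 0 \<Longrightarrow> Yh l \<in> borel_measurable M"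
    and W_kernel: "W \<in> borel \<rightarrow>\<^sub>M prob_algebra borel"
    and Y_law: "\<And>A B C. A \<in> sets borel \<Longrightarrow> B \<in> sets borel \<Longrightarrow> C \<in> sets borel \<Longrightarrow>
           measure M {\<omega>\<in>space M. U \<omega> \<in> A \<and> X \<omega> \<in> B \<and> Y \<omega> \<in> C}
         = (\<integral>\<omega>. indicator {\<omega>\<in>space M. U \<omega> \<in> A \<and> X \<omega> \<in> B} \<omega> * measure (W (X \<omega>)) C \<partial>M)"
    and Yh_law: "\<And>l A B C. l > 0 \<Longrightarrow> A \<in> sets borel \<Longrightarrow> B \<in> sets borel \<Longrightarrow> C \<in> sets borel \<Longrightarrow>
           measure M {\<omega>\<in>space M. U \<omega> \<in> A \<and> X \<omega> \<in> B \<and> Yh l \<omega> \<in> C}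
         = (\<integral>\<omega>. indicator {\<omega>\<in>space M. U \<omega> \<in> A \<and> X \<omega> \<in> B} \<omega> * measure (W (clip l (X \<omega>))) C \<partial>M)"
begin

definition cell_prob :: "('a \<Rightarrow> real) \<Rightarrow> real set \<Rightarrow> real set \<Rightarrow> real set \<Rightarrow> real" where
  "cell_prob V F A B = measure M (event M X F \<inter> event M U A \<inter> event M V B)"

lemma cell_prob_Collect:
  "cell_prob V F A B = measure M {\<omega>\<in>space M. U \<omega> \<in> A \<and> X \<omega> \<in> F \<and> V \<omega> \<in> B}"
  unfolding cell_prob_def event_def by (rule arg_cong[where f = "measure M"]) auto

lemma kernel_prob: "prob_space (W c)" "sets (W c) = sets borel"
  using measurable_space[OF W_kernel, of c] by (auto simp: space_prob_algebra)

text \<open>On a cell inside [-l, l] clipping does nothing, so both outputs have the same law.\<close>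
lemma cell_prob_inner:
  assumes "0 < l" "F \<in> sets borel" "F \<subseteq> {-l..l}" "A \<in> sets borel" "B \<in> sets borel"
  shows "cell_prob (Yh l) F A B = cell_prob Y F A B"
proof -
  have "clip l (X \<omega>) = X \<omega>" if "X \<omega> \<in> F" for \<omega>
    using subsetD[OF assms(3) that] by (intro clip_id) auto
  then have integrand:
    "indicator {\<omega>\<in>space M. U \<omega> \<in> A \<and> X \<omega> \<in> F} \<omega> * measure (W (clip l (X \<omega>))) B =
     indicator {\<omega>\<in>space M. U \<omega> \<in> A \<and> X \<omega> \<in> F} \<omega> * measure (W (X \<omega>)) B" for \<omega>
    by (cases "X \<omega> \<in> F") (auto simp: indicator_def)
  have "cell_prob (Yh l) F A B = (\<integral>\<omega>. indicator {\<omega>\<in>space M. U \<omega> \<in> A \<and> X \<omega> \<in> F} \<omega>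
      * measure (W (clip l (X \<omega>))) B \<partial>M)"
    unfolding cell_prob_Collect using Yh_law assms by simp
  also have "\<dots> = (\<integral>\<omega>. indicator {\<omega>\<in>space M. U \<omega> \<in> A \<and> X \<omega> \<in> F} \<omega> * measure (W (X \<omega>)) B \<partial>M)"
    using integrand by (rule Bochner_Integration.integral_cong[OF refl])
  also have "\<dots> = cell_prob Y F A B"
    unfolding cell_prob_Collect using Y_law assms by simp
  finally show ?thesis .
qed

lemma cell_prob_const:
  assumes "0 < l" "F \<in> sets borel" "\<And>x. x \<in> F \<Longrightarrow> clip l x = c" "A \<in> sets borel" "B \<in> sets borel"
  shows "cell_prob (Yh l) F A B = measure (W c) B * measure M (event M X F \<inter> event M U A)"
proof -
  interpret prob_space M by (rule prob)
  have E: "{\<omega>\<in>space M. U \<omega> \<in> A \<and> X \<omega> \<in> F} = event M X F \<inter> event M U A"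
    by (auto simp: event_def)
  have integrand: "indicator (event M X F \<inter> event M U A) \<omega> * measure (W (clip l (X \<omega>))) B =
        indicator (event M X F \<inter> event M U A) \<omega> * measure (W c) B" for \<omega>
    using assms(3) by (cases "X \<omega> \<in> F") (auto simp: indicator_def event_def)
  have "cell_prob (Yh l) F A B
      = (\<integral>\<omega>. indicator (event M X F \<inter> event M U A) \<omega> * measure (W (clip l (X \<omega>))) B \<partial>M)"
    unfolding cell_prob_Collect using Yh_law[OF assms(1,4,2,5)] by (simp add: E)
  also have "\<dots> = (\<integral>\<omega>. indicator (event M X F \<inter> event M U A) \<omega> * measure (W c) B \<partial>M)"
    using integrand by (rule Bochner_Integration.integral_cong[OF refl])
  also have "\<dots> = (\<integral>\<omega>. indicator (event M X F \<inter> event M U A) \<omega> \<partial>M) * measure (W c) B"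
    by (rule integral_mult_left_zero)
  also have "\<dots> = measure M (event M X F \<inter> event M U A) * measure (W c) B"
    by (simp add: Bochner_Integration.integral_indicator Int_assoc)
  finally show ?thesis by simp
qed

lemma joint_split_cells:
  assumes "0 < l" "V \<in> borel_measurable M" "A \<in> sets borel" "B \<in> sets borel"
  shows "measure M (event M U A \<inter> event M V B) = (\<Sum>F\<in>clip_cells l. cell_prob V F A B)"
proof -
  interpret prob_space M by (rule prob)
  have "event M U A \<inter> event M V B \<in> sets M" using assms U_meas by auto
  from measure_partition_sum[OF finite_measure_axioms clip_cells_partition[OF assms(1)] X_meas
        sets.top this]
  show ?thesis unfolding cell_prob_def by (simp add: Int_ac)
qed

lemma cell_prob_le:
  "F \<in> sets borel \<Longrightarrow> V \<in> borel_measurable M \<Longrightarrow> cell_prob V F A B \<le> measure M (event M X F)"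
  unfolding cell_prob_def using prob_space.finite_measure[OF prob] X_meas
  by (auto intro!: finite_measure.finite_measure_mono)

lemma cell_prob_row_sum:
  assumes "V \<in> borel_measurable M" "finite_partition R" "F \<in> sets borel" "A \<in> sets borel"
  shows "(\<Sum>B\<in>R. cell_prob V F A B) = measure M (event M X F \<inter> event M U A)"
proof -
  interpret prob_space M by (rule prob)
  have "event M X F \<inter> event M U A \<in> sets M" using assms(3,4) U_meas X_meas by auto
  from measure_partition_sum[OF finite_measure_axioms assms(2,1) this sets.top]
  show ?thesis unfolding cell_prob_def by simp
qed

lemma cell_prob_cell_sum:
  assumes "V \<in> borel_measurable M" "finite_partition Q" "finite_partition R" "F \<in> sets borel"
  shows "(\<Sum>A\<in>Q. \<Sum>B\<in>R. cell_prob V F A B) = measure M (event M X F)"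
proof -
  interpret prob_space M by (rule prob)
  have "event M X F \<in> sets M" using assms(4) X_meas by auto
  then show ?thesis
    using measure_partition_sum[OF finite_measure_axioms assms(2) U_meas _ sets.top, of "event M X F"]
      cell_prob_row_sum[OF assms(1,3,4)] assms(2) by (simp add: finite_partition_sets)
qed

lemma clip_cell_cases:
  assumes l: "0 < l" and Q: "finite_partition Q" and R: "finite_partition R"
    and F: "F \<in> clip_cells l"
  shows "(\<forall>A\<in>Q. \<forall>B\<in>R. cell_prob (Yh l) F A B = cell_prob Y F A B) \<or>
    (\<exists>w. (\<forall>B\<in>R. 0 \<le> w B) \<and> (\<Sum>B\<in>R. w B) = 1 \<and>
         (\<forall>A\<in>Q. \<forall>B\<in>R. cell_prob (Yh l) F A B = w B * (\<Sum>B'\<in>R. cell_prob Y F A B')))"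
proof -
  have sets: "A \<in> sets borel" "B \<in> sets borel" "F \<in> sets borel" if "A \<in> Q" "B \<in> R" for A B
    using that Q R F clip_cells_partition[OF l] by (auto intro: finite_partition_sets)
  have independent: ?thesis if "\<And>x. x \<in> F \<Longrightarrow> clip l x = c" for c
    using cell_prob_const[OF l _ that] cell_prob_row_sum[OF Y_meas R]
      prob_partition_sum[OF kernel_prob R] sets
    by (intro disjI2 exI[of _ "\<lambda>B. measure (W c) B"]) auto
  consider "F = {-l..l}" | "F = {l<..}" | "F = {..<-l}" using F unfolding clip_cells_def by blast
  then show ?thesis
  proof cases
    case 1
    then show ?thesis using cell_prob_inner[OF l] sets by auto
  next
    case 2
    then show ?thesis using independent[of l] clip_above[OF l] by auto
  next
    case 3
    then show ?thesis using independent[of "-l"] clip_below[OF l] by auto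
  qed
qed

lemma disc_MI_clipped_le:
  assumes l: "0 < l" and Q: "finite_partition Q" and R: "finite_partition R"
  shows "disc_MI M U (Yh l) Q R
      \<le> disc_MI M U Y Q R - (\<Sum>F\<in>clip_cells l. eta (measure M (event M X F)))"
proof -
  interpret prob_space M by (rule prob)
  note cells = clip_cells_partition[OF l]
  have MI: "disc_MI M U V Q R = eta_MI Q R (\<lambda>A B. \<Sum>F\<in>clip_cells l. cell_prob V F A B)"
    if "V \<in> borel_measurable M" for V
    unfolding disc_MI_eq_eta_MI[OF prob Q R U_meas that]
    using Q R by (intro eta_MI_cong joint_split_cells l that) (auto intro: finite_partition_sets)
  have X_marg: "(\<Sum>A\<in>Q. \<Sum>B\<in>R. cell_prob Y F A B) = measure M (event M X F)"
    if "F \<in> clip_cells l" for F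
    using cell_prob_cell_sum[OF Y_meas Q R finite_partition_sets[OF cells that]] by simp
  have total: "(\<Sum>F\<in>clip_cells l. \<Sum>A\<in>Q. \<Sum>B\<in>R. cell_prob Y F A B) = 1"
    using measure_partition_sum[OF finite_measure_axioms cells X_meas sets.top sets.top]
    by (simp add: X_marg prob_space)
  have "eta_MI Q R (\<lambda>A B. \<Sum>F\<in>clip_cells l. cell_prob (Yh l) F A B)
      \<le> eta_MI Q R (\<lambda>A B. \<Sum>F\<in>clip_cells l. cell_prob Y F A B)
        - (\<Sum>F\<in>clip_cells l. eta (\<Sum>A\<in>Q. \<Sum>B\<in>R. cell_prob Y F A B))"
    by (rule clipped_channel_bound[OF _ _ _ _ _ total clip_cell_cases[OF l Q R]])
      (use cells Q R in \<open>auto simp: cell_prob_def intro: finite_partition_finite\<close>)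
  then show ?thesis
    using MI[OF Yh_meas[OF l]] MI[OF Y_meas] X_marg by (simp cong: sum.cong)
qed

text \<open>The joint laws of (U, Yh l) and (U, Y) differ only on the tails of X.\<close>
lemma joint_clipped_tendsto:
  assumes "A \<in> sets borel" "B \<in> sets borel"
  shows "((\<lambda>l. measure M (event M U A \<inter> event M (Yh l) B))
          \<longlongrightarrow> measure M (event M U A \<inter> event M Y B)) at_top"
proof -
  define tail where "tail l = measure M (event M X {l<..}) + measure M (event M X {..<-l})" for l
  have tail_lim: "(tail \<longlongrightarrow> 0) at_top"
    unfolding tail_def using tendsto_add[OF tails_tendsto_0[OF prob X_meas]] by simp
  have bound: "\<bar>measure M (event M U A \<inter> event M (Yh l) B) - measure M (event M U A \<inter> event M Y B)\<bar>
      \<le> tail l" if l: "0 < l" for l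
  proof -
    have diff: "\<bar>cell_prob (Yh l) F A B - cell_prob Y F A B\<bar> \<le> measure M (event M X F)"
      if "F \<in> sets borel" for F
      using cell_prob_le[OF that Y_meas] cell_prob_le[OF that Yh_meas[OF l]]
      unfolding cell_prob_def by (smt (verit) measure_nonneg)
    show ?thesis
      using joint_split_cells[OF l Yh_meas[OF l] assms] joint_split_cells[OF l Y_meas assms]
        cell_prob_inner[OF l _ _ assms, of "{-l..l}"] diff[of "{l<..}"] diff[of "{..<-l}"]
      unfolding tail_def sum_clip_cells[OF l] by simp
  qed
  have "\<forall>\<^sub>F l in at_top. norm (measure M (event M U A \<inter> event M (Yh l) B)
      - measure M (event M U A \<inter> event M Y B)) \<le> tail l"
    using eventually_gt_at_top[of 0] by eventually_elim (simp add: bound)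
  then show ?thesis
    by (rule LIM_zero_cancel[OF Lim_null_comparison[OF _ tail_lim]])
qed

lemma disc_MI_clipped_tendsto:
  assumes Q: "finite_partition Q" and R: "finite_partition R"
  shows "((\<lambda>l. disc_MI M U (Yh l) Q R) \<longlongrightarrow> disc_MI M U Y Q R) at_top"
proof -
  have "((\<lambda>l. eta_MI Q R (\<lambda>A B. measure M (event M U A \<inter> event M (Yh l) B)))
        \<longlongrightarrow> eta_MI Q R (\<lambda>A B. measure M (event M U A \<inter> event M Y B))) at_top"
    using Q R by (intro eta_MI_tendsto joint_clipped_tendsto)
      (auto intro: finite_partition_finite finite_partition_sets)
  moreover have "\<forall>\<^sub>F l in at_top. eta_MI Q R (\<lambda>A B. measure M (event M U A \<inter> event M (Yh l) B))
      = disc_MI M U (Yh l) Q R"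
    using eventually_gt_at_top[of 0]
    by eventually_elim (simp add: disc_MI_eq_eta_MI[OF prob Q R U_meas Yh_meas])
  ultimately show ?thesis
    unfolding disc_MI_eq_eta_MI[OF prob Q R U_meas Y_meas] by (rule Lim_transform_eventually)
qed

end

theorem mainTheorem10:
  fixes M :: "'a measure" and U X Y :: "'a \<Rightarrow> real"
    and Yh :: "real \<Rightarrow> 'a \<Rightarrow> real" and W :: "real \<Rightarrow> real measure"
  assumes "prob_space M"
    and "U \<in> borel_measurable M" and "X \<in> borel_measurable M" and "Y \<in> borel_measurable M"
    and "\<And>l. l > 0 \<Longrightarrow> Yh l \<in> borel_measurable M"
    and "W \<in> borel \<rightarrow>\<^sub>M prob_algebra borel"
    and "\<And>A B C. A \<in> sets borel \<Longrightarrow> B \<in> sets borel \<Longrightarrow> C \<in> sets borel \<Longrightarrow>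
           measure M {\<omega>\<in>space M. U \<omega> \<in> A \<and> X \<omega> \<in> B \<and> Y \<omega> \<in> C}
         = (\<integral>\<omega>. indicator {\<omega>\<in>space M. U \<omega> \<in> A \<and> X \<omega> \<in> B} \<omega> * measure (W (X \<omega>)) C \<partial>M)"
    and "\<And>l A B C. l > 0 \<Longrightarrow> A \<in> sets borel \<Longrightarrow> B \<in> sets borel \<Longrightarrow> C \<in> sets borel \<Longrightarrow>
           measure M {\<omega>\<in>space M. U \<omega> \<in> A \<and> X \<omega> \<in> B \<and> Yh l \<omega> \<in> C}
         = (\<integral>\<omega>. indicator {\<omega>\<in>space M. U \<omega> \<in> A \<and> X \<omega> \<in> B} \<omega> * measure (W (clip l (X \<omega>))) C \<partial>M)"
  shows "((\<lambda>l. gen_MI M U (Yh l)) \<longlongrightarrow> gen_MI M U Y) at_top"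
proof -
  interpret clipped_channel M U X Y Yh W
    by (rule clipped_channel.intro[OF assms])
  define S where "S = {(Q, R). finite_partition Q \<and> finite_partition R}"
  have "({UNIV}, {UNIV}) \<in> S"
    unfolding S_def using finite_partition_trivial by simp
  moreover have "\<forall>\<^sub>F l in at_top. \<forall>QR\<in>S. disc_MI M U (Yh l) (fst QR) (snd QR)
      \<le> disc_MI M U Y (fst QR) (snd QR) + - (\<Sum>F\<in>clip_cells l. eta (measure M (event M X F)))"
    using eventually_gt_at_top[of 0]
    by eventually_elim (use disc_MI_clipped_le in \<open>auto simp: S_def\<close>)
  ultimately show ?thesis
    unfolding gen_MI_def S_def[symmetric]
    by (intro SUP_ereal_tendsto[where e = "\<lambda>l. - (\<Sum>F\<in>clip_cells l. eta (measure M (event M X F)))"]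
        clip_cells_entropy_tendsto_0[OF assms(1,3)])
      (auto simp: S_def intro: disc_MI_clipped_tendsto)
qed

end
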